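(* Let $C=\bigwedge_{k=1}^m(c_{k,1}\vee c_{k,2}\vee c_{k,3})$ be a 3-SAT formula in $n$ Boolean variables $x_1,\dots,x_n$, where each literal $c_{k,j}$ equals $x_i$ or $\overline{x_i}$ for some $i$. On $m+n$ qubits labelled $\{1,\dots,n\}\cup\{d_1,\dots,d_m\}$ define \[H_C=\sum_{k=1}^m-(X_{d_k}+Z_{d_k}+I)\otimes\big(S(c_{k,1})+S(c_{k,2})+S(c_{k,3})+2I\big),\] where $S(c)=Z_i$ if $c=x_i$ and $S(c)=X_i$ if $c=\overline{x_i}$. For $x\in\{0,1\}^n$, $y\in\{0,1\}^m$ let ${\sf W}(x,y)=\big(\bigotimes_{i=1}^n W_i^{x_i}\big)\otimes\big(\bigotimes_{j=1}^m W_{d_j}^{y_j}\big)$, with $W$ the Hadamard gate. Then for every $x\in\{0,1\}^n$: $C(x)$ evaluates to true if and only if for all $y\in\{0,1\}^m$ the matrix ${\sf W}(x,y)H_C{\sf W}(x,y)^\dagger$ is a symmetric $Z$-matrix.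
   Context: A Hermitian matrix is a symmetric $Z$-matrix if it is real and all off-diagonal entries in the computational basis are non-positive. $X_\alpha,Z_\alpha$ denote Pauli matrices on qubit $\alpha$; $W=\frac1{\sqrt2}\begin{pmatrix}1&1\\1&-1\end{pmatrix}$, $W^0=I$, $W^1=W$. *)

theory Defs
  imports Complex_Main "HOL-Library.FuncSet"
begin

text \<open>Qubits are labelled by natural numbers in a finite
  set Q; computational basis states are the functions Q \<rightarrow> bool (bit False = |0>,
  True = |1>), extensional outside Q.  An operator is given by its matrix entries
  A s t = <s|A|t>.\<close>

type_synonym gate = "bool \<Rightarrow> bool \<Rightarrow> complex"
type_synonym qop = "(nat \<Rightarrow> bool) \<Rightarrow> (nat \<Rightarrow> bool) \<Rightarrow> complex"

definition basis :: "nat set \<Rightarrow> (nat \<Rightarrow> bool) set" where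
  "basis Q = Pi\<^sub>E Q (\<lambda>_. UNIV)"

definition I2 :: gate where "I2 a b = (if a = b then 1 else 0)"
definition X2 :: gate where "X2 a b = (if a \<noteq> b then 1 else 0)"
definition Z2 :: gate where "Z2 a b = (if a = b then (if a then -1 else 1) else 0)"
definition Had :: gate where "Had a b = (if a \<and> b then -1 else 1) / complex_of_real (sqrt 2)"

definition Wpow :: "bool \<Rightarrow> gate" where "Wpow b = (if b then Had else I2)"

definition tensor :: "nat set \<Rightarrow> (nat \<Rightarrow> gate) \<Rightarrow> qop" where
  "tensor Q G = (\<lambda>s t. \<Prod>q\<in>Q. G q (s q) (t q))"

definition on_qubit :: "nat set \<Rightarrow> nat \<Rightarrow> gate \<Rightarrow> qop" where
  "on_qubit Q q G = tensor Q (\<lambda>p. if p = q then G else I2)"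

definition qid :: "nat set \<Rightarrow> qop" where "qid Q = tensor Q (\<lambda>_. I2)"

definition qmult :: "nat set \<Rightarrow> qop \<Rightarrow> qop \<Rightarrow> qop" where
  "qmult Q A B = (\<lambda>s t. \<Sum>u\<in>basis Q. A s u * B u t)"

definition qadd :: "qop \<Rightarrow> qop \<Rightarrow> qop" where
  "qadd A B = (\<lambda>s t. A s t + B s t)"

definition qscale :: "complex \<Rightarrow> qop \<Rightarrow> qop" where
  "qscale c A = (\<lambda>s t. c * A s t)"

definition qsum :: "nat set \<Rightarrow> (nat \<Rightarrow> qop) \<Rightarrow> qop" where
  "qsum K F = (\<lambda>s t. \<Sum>k\<in>K. F k s t)"

definition qadj :: "qop \<Rightarrow> qop" where
  "qadj A = (\<lambda>s t. cnj (A t s))"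

definition sym_Zmatrix :: "nat set \<Rightarrow> qop \<Rightarrow> bool" where
  "sym_Zmatrix Q A \<longleftrightarrow>
     (\<forall>s\<in>basis Q. \<forall>t\<in>basis Q.
        A s t = cnj (A t s) \<and> Im (A s t) = 0 \<and> (s \<noteq> t \<longrightarrow> Re (A s t) \<le> 0))"

text \<open>3-SAT: a literal is (i, pos) meaning x_i if pos, and the negation of x_i otherwise.
  Variables are indexed 0..n-1, clauses 0..m-1, literal j of clause k is lit k j (j < 3).\<close>
type_synonym literal = "nat \<times> bool"

definition lit_val :: "(nat \<Rightarrow> bool) \<Rightarrow> literal \<Rightarrow> bool" where
  "lit_val x c = (if snd c then x (fst c) else \<not> x (fst c))"

definition sat3 :: "nat \<Rightarrow> (nat \<Rightarrow> nat \<Rightarrow> literal) \<Rightarrow> (nat \<Rightarrow> bool) \<Rightarrow> bool" where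
  "sat3 m lit x \<longleftrightarrow> (\<forall>k<m. \<exists>j<3. lit_val x (lit k j))"

definition wf3sat :: "nat \<Rightarrow> nat \<Rightarrow> (nat \<Rightarrow> nat \<Rightarrow> literal) \<Rightarrow> bool" where
  "wf3sat n m lit \<longleftrightarrow> (\<forall>k<m. \<forall>j<3. fst (lit k j) < n)"

text \<open>Qubit layout: variable qubit i (0-based) is qubit i; clause qubit d_k (0-based k) is n + k.\<close>
definition qubits :: "nat \<Rightarrow> nat \<Rightarrow> nat set" where "qubits n m = {..<n + m}"

definition Sop :: "nat set \<Rightarrow> literal \<Rightarrow> qop" where
  "Sop Q c = (if snd c then on_qubit Q (fst c) Z2 else on_qubit Q (fst c) X2)"

definition H_C :: "nat \<Rightarrow> nat \<Rightarrow> (nat \<Rightarrow> nat \<Rightarrow> literal) \<Rightarrow> qop" where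
  "H_C n m lit = (let Q = qubits n m in
     qsum {..<m} (\<lambda>k. qscale (-1)
       (qmult Q
          (qadd (qadd (on_qubit Q (n + k) X2) (on_qubit Q (n + k) Z2)) (qid Q))
          (qadd (qadd (qadd (Sop Q (lit k 0)) (Sop Q (lit k 1))) (Sop Q (lit k 2)))
                (qscale 2 (qid Q))))))"

definition Wxy :: "nat \<Rightarrow> nat \<Rightarrow> (nat \<Rightarrow> bool) \<Rightarrow> (nat \<Rightarrow> bool) \<Rightarrow> qop" where
  "Wxy n m x y = tensor (qubits n m) (\<lambda>q. if q < n then Wpow (x q) else Wpow (y (q - n)))"

end

theory Submission
  imports Defs "HOL-Library.Complex_Order"
begin

text \<open>
  Conjugation by W(x,y) acts qubit by qubit, and a Hadamard gate swaps X and Z.  Hence the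
  conjugated Hamiltonian is  - sum_k (X + Z + I)_(d_k) (S'_(k,1) + S'_(k,2) + S'_(k,3) + 2I),
  where S' is X for a literal that is true under x and Z for a false one; y drops out because
  X + Z + I is invariant under the swap.  Every summand is real and symmetric, and X + Z + I
  has non-negative entries.  So does the clause factor as soon as one of its S' is X, its
  diagonal being at least 2 - 2; a satisfying x therefore yields a Z-matrix.  If clause k is
  false, its factor has the diagonal entry 2 - 3 = -1 at the state t with all variables set to 1,
  and the off-diagonal X entry on qubit d_k moves this to an entry +1 at (t with d_k reset, t),
  where no other summand contributes since those act as the identity on d_k.
\<close>

definition gmult :: "gate \<Rightarrow> gate \<Rightarrow> gate" where
  "gmult A B = (\<lambda>a b. A a False * B False b + A a True * B True b)"

definition gadj :: "gate \<Rightarrow> gate" where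
  "gadj G = (\<lambda>a b. cnj (G b a))"

definition gconj :: "gate \<Rightarrow> gate \<Rightarrow> gate" where
  "gconj W G = gmult (gmult W G) (gadj W)"

definition gsym :: "gate \<Rightarrow> bool" where
  "gsym G \<longleftrightarrow> (\<forall>a b. G a b = G b a)"

lemma gmult_I2_left [simp]: "gmult I2 G = G"
  by (auto simp: fun_eq_iff gmult_def I2_def)

lemma gmult_I2_right [simp]: "gmult G I2 = G"
  by (auto simp: fun_eq_iff gmult_def I2_def)

lemma gadj_I2 [simp]: "gadj I2 = I2"
  by (auto simp: fun_eq_iff gadj_def I2_def)

lemma gsym_I2 [simp]: "gsym I2" and gsym_X2 [simp]: "gsym X2" and gsym_Z2 [simp]: "gsym Z2"
  by (auto simp: gsym_def I2_def X2_def Z2_def)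

lemma Had_unitary: "gmult (gadj Had) Had = I2" "gmult Had (gadj Had) = I2"
  by (auto simp: fun_eq_iff gmult_def gadj_def Had_def I2_def field_simps simp flip: of_real_mult)

lemma gconj_Had_X2: "gconj Had X2 = Z2"
  by (auto simp: fun_eq_iff gconj_def gmult_def gadj_def Had_def X2_def Z2_def field_simps
      simp flip: of_real_mult)

lemma gconj_Had_Z2: "gconj Had Z2 = X2"
  by (auto simp: fun_eq_iff gconj_def gmult_def gadj_def Had_def X2_def Z2_def field_simps
      simp flip: of_real_mult)

lemma Wpow_unitary: "gmult (gadj (Wpow b)) (Wpow b) = I2" "gmult (Wpow b) (gadj (Wpow b)) = I2"
  by (simp_all add: Wpow_def Had_unitary)

lemma gconj_Wpow:
  "gconj (Wpow b) I2 = I2"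
  "gconj (Wpow b) X2 = (if b then Z2 else X2)"
  "gconj (Wpow b) Z2 = (if b then X2 else Z2)"
  by (simp_all add: gconj_def Wpow_unitary)
    (simp_all add: Wpow_def gconj_Had_X2 gconj_Had_Z2 flip: gconj_def)

definition qconj :: "nat set \<Rightarrow> qop \<Rightarrow> qop \<Rightarrow> qop" where
  "qconj Q V A = qmult Q (qmult Q V A) (qadj V)"

definition qsym :: "qop \<Rightarrow> bool" where
  "qsym A \<longleftrightarrow> (\<forall>s t. A s t = A t s)"

lemma finite_basis: "finite Q \<Longrightarrow> finite (basis Q)"
  by (simp add: basis_def finite_PiE)

lemma basis_eqI: "u \<in> basis Q \<Longrightarrow> v \<in> basis Q \<Longrightarrow> (\<And>q. q \<in> Q \<Longrightarrow> u q = v q) \<Longrightarrow> u = v"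
  by (auto simp: basis_def PiE_iff extensional_def fun_eq_iff)

lemma fun_upd_in_basis: "s \<in> basis Q \<Longrightarrow> p \<in> Q \<Longrightarrow> s(p := b) \<in> basis Q"
  unfolding basis_def using PiE_fun_upd[of b "\<lambda>_. UNIV" p s Q] by (simp add: insert_absorb)

lemma sum_eq_single:
  assumes "finite A" "a \<in> A" "\<And>u. u \<in> A \<Longrightarrow> u \<noteq> a \<Longrightarrow> f u = 0"
  shows "sum f A = f a"
  using assms by (simp add: sum.remove sum.neutral)

lemma qmult_tensor:
  assumes "finite Q"
  shows "qmult Q (tensor Q F) (tensor Q G) = tensor Q (\<lambda>q. gmult (F q) (G q))"
proof (intro ext)
  fix s t
  have "qmult Q (tensor Q F) (tensor Q G) s t
      = (\<Sum>u\<in>basis Q. \<Prod>q\<in>Q. F q (s q) (u q) * G q (u q) (t q))"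
    unfolding qmult_def tensor_def by (simp add: prod.distrib)
  also have "\<dots> = (\<Prod>q\<in>Q. \<Sum>c\<in>UNIV. F q (s q) c * G q c (t q))"
    unfolding basis_def using assms by (simp add: prod_sum_PiE)
  also have "\<dots> = tensor Q (\<lambda>q. gmult (F q) (G q)) s t"
    by (simp add: tensor_def gmult_def UNIV_bool)
  finally show "qmult Q (tensor Q F) (tensor Q G) s t = tensor Q (\<lambda>q. gmult (F q) (G q)) s t" .
qed

lemma qadj_tensor: "qadj (tensor Q F) = tensor Q (\<lambda>q. gadj (F q))"
  by (simp add: fun_eq_iff qadj_def tensor_def gadj_def)

lemma qmult_assoc: "qmult Q (qmult Q A B) C = qmult Q A (qmult Q B C)"
proof (intro ext)
  fix s t
  have "qmult Q (qmult Q A B) C s t = (\<Sum>u\<in>basis Q. \<Sum>v\<in>basis Q. A s v * B v u * C u t)"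
    unfolding qmult_def by (simp add: sum_distrib_right)
  also have "\<dots> = (\<Sum>v\<in>basis Q. \<Sum>u\<in>basis Q. A s v * B v u * C u t)"
    by (rule sum.swap)
  also have "\<dots> = qmult Q A (qmult Q B C) s t"
    unfolding qmult_def by (simp add: sum_distrib_left mult.assoc)
  finally show "qmult Q (qmult Q A B) C s t = qmult Q A (qmult Q B C) s t" .
qed

lemma prod_I2: "finite A \<Longrightarrow> (\<Prod>q\<in>A. I2 (s q) (t q)) = (if \<forall>q\<in>A. s q = t q then 1 else 0)"
  unfolding I2_def by (induction A rule: finite_induct) auto

lemma qid_entry: "finite Q \<Longrightarrow> qid Q s t = (if \<forall>q\<in>Q. s q = t q then 1 else 0)"
  by (simp add: qid_def tensor_def prod_I2)

lemma qmult_qid_left: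
  assumes "finite Q" "u \<in> basis Q"
  shows "qmult Q (qid Q) A u t = A u t"
  unfolding qmult_def
  using assms basis_eqI[of u Q] by (subst sum_eq_single[of _ u]) (auto simp: finite_basis qid_entry)

lemma qmult_add_left: "qmult Q (qadd A B) C = qadd (qmult Q A C) (qmult Q B C)"
  by (simp add: fun_eq_iff qmult_def qadd_def distrib_right sum.distrib)

lemma qmult_add_right: "qmult Q A (qadd B C) = qadd (qmult Q A B) (qmult Q A C)"
  by (simp add: fun_eq_iff qmult_def qadd_def distrib_left sum.distrib)

lemma qmult_scale_left: "qmult Q (qscale c A) B = qscale c (qmult Q A B)"
  by (simp add: fun_eq_iff qmult_def qscale_def sum_distrib_left mult_ac)

lemma qmult_scale_right: "qmult Q A (qscale c B) = qscale c (qmult Q A B)"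
  by (simp add: fun_eq_iff qmult_def qscale_def sum_distrib_left mult_ac)

lemma qsum_cong: "(\<And>k. k \<in> K \<Longrightarrow> F k = G k) \<Longrightarrow> qsum K F = qsum K G"
  by (simp add: fun_eq_iff qsum_def)

lemma qmult_qsum_left: "qmult Q (qsum K F) B = qsum K (\<lambda>k. qmult Q (F k) B)"
  unfolding qmult_def qsum_def by (simp add: fun_eq_iff sum_distrib_right sum.swap[of _ "basis Q"])

lemma qmult_qsum_right: "qmult Q A (qsum K F) = qsum K (\<lambda>k. qmult Q A (F k))"
  unfolding qmult_def qsum_def by (simp add: fun_eq_iff sum_distrib_left sum.swap[of _ "basis Q"])

lemma qconj_add: "qconj Q V (qadd A B) = qadd (qconj Q V A) (qconj Q V B)"
  by (simp add: qconj_def qmult_add_left qmult_add_right)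

lemma qconj_scale: "qconj Q V (qscale c A) = qscale c (qconj Q V A)"
  by (simp add: qconj_def qmult_scale_left qmult_scale_right)

lemma qconj_qsum: "qconj Q V (qsum K F) = qsum K (\<lambda>k. qconj Q V (F k))"
  by (simp add: qconj_def qmult_qsum_left qmult_qsum_right)

lemma qconj_mult:
  assumes "finite Q" and unitary: "qmult Q (qadj V) V = qid Q"
  shows "qconj Q V (qmult Q A B) = qmult Q (qconj Q V A) (qconj Q V B)"
proof -
  have "qmult Q (qconj Q V A) (qconj Q V B)
      = qmult Q (qmult Q V A) (qmult Q (qmult Q (qadj V) V) (qmult Q B (qadj V)))"
    by (simp add: qconj_def qmult_assoc)
  also have "\<dots> = qmult Q (qmult Q V A) (qmult Q B (qadj V))"
    unfolding unitary qmult_def[of Q "qmult Q V A"] using qmult_qid_left[OF \<open>finite Q\<close>] by simp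
  finally show ?thesis
    by (simp add: qconj_def qmult_assoc)
qed

lemma qconj_tensor:
  "finite Q \<Longrightarrow> qconj Q (tensor Q V) (tensor Q G) = tensor Q (\<lambda>q. gconj (V q) (G q))"
  by (simp add: qconj_def gconj_def qmult_tensor qadj_tensor)

lemma tensor_Wpow_unitary:
  "finite Q \<Longrightarrow> qmult Q (qadj (tensor Q (\<lambda>q. Wpow (b q)))) (tensor Q (\<lambda>q. Wpow (b q))) = qid Q"
  by (simp add: qid_def qmult_tensor qadj_tensor Wpow_unitary)

lemma qconj_Wpow_on_qubit:
  "finite Q \<Longrightarrow>
    qconj Q (tensor Q (\<lambda>q. Wpow (b q))) (on_qubit Q p G) = on_qubit Q p (gconj (Wpow (b p)) G)"
  unfolding on_qubit_def by (simp add: qconj_tensor if_distrib gconj_Wpow cong: if_cong)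

lemma qconj_Wpow_qid: "finite Q \<Longrightarrow> qconj Q (tensor Q (\<lambda>q. Wpow (b q))) (qid Q) = qid Q"
  by (simp add: qid_def qconj_tensor gconj_Wpow)

lemma on_qubit_entry:
  assumes "finite Q" "p \<in> Q"
  shows "on_qubit Q p G s t = G (s p) (t p) * (if \<forall>q\<in>Q-{p}. s q = t q then 1 else 0)"
proof -
  have "(\<Prod>q\<in>Q-{p}. (if q = p then G else I2) (s q) (t q)) = (\<Prod>q\<in>Q-{p}. I2 (s q) (t q))"
    by (rule prod.cong) auto
  also have "\<dots> = (if \<forall>q\<in>Q-{p}. s q = t q then 1 else 0)"
    using assms(1) by (simp add: prod_I2)
  finally show ?thesis
    using assms by (simp add: on_qubit_def tensor_def prod.remove[of Q p])
qed

lemma on_qubit_eq_0: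
  "finite Q \<Longrightarrow> p \<in> Q \<Longrightarrow> q \<in> Q \<Longrightarrow> q \<noteq> p \<Longrightarrow> s q \<noteq> t q \<Longrightarrow> on_qubit Q p G s t = 0"
  by (auto simp: on_qubit_entry)

lemma on_qubit_add:
  "finite Q \<Longrightarrow> p \<in> Q \<Longrightarrow> qadd (on_qubit Q p G) (on_qubit Q p P) = on_qubit Q p (\<lambda>a b. G a b + P a b)"
  by (simp add: fun_eq_iff qadd_def on_qubit_entry distrib_right)

lemma qid_eq_on_qubit: "qid Q = on_qubit Q p I2"
  by (simp add: qid_def on_qubit_def)

lemma qmult_on_qubit_entry:
  assumes Q: "finite Q" "p \<in> Q" and s: "s \<in> basis Q"
    and idle: "\<And>u. u p \<noteq> t p \<Longrightarrow> B u t = 0"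
  shows "qmult Q (on_qubit Q p G) B s t = G (s p) (t p) * B (s(p := t p)) t"
proof -
  have "on_qubit Q p G s u * B u t = 0" if u: "u \<in> basis Q" "u \<noteq> s(p := t p)" for u
  proof (cases "u p = t p")
    case True
    obtain q where "q \<in> Q" "u q \<noteq> (s(p := t p)) q"
      using u basis_eqI[of u Q "s(p := t p)"] fun_upd_in_basis[OF s Q(2)] by blast
    with True have "q \<in> Q-{p}" "s q \<noteq> u q"
      by (auto split: if_splits)
    then show ?thesis by (auto simp: on_qubit_entry Q)
  qed (simp add: idle)
  then have "qmult Q (on_qubit Q p G) B s t = on_qubit Q p G s (s(p := t p)) * B (s(p := t p)) t"
    unfolding qmult_def by (intro sum_eq_single finite_basis fun_upd_in_basis Q s)
  then show ?thesis by (simp add: on_qubit_entry Q)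
qed

lemma qsym_tensor: "(\<And>q. gsym (G q)) \<Longrightarrow> qsym (tensor Q G)"
  by (simp add: qsym_def tensor_def gsym_def)

lemma qsym_add: "qsym A \<Longrightarrow> qsym B \<Longrightarrow> qsym (qadd A B)"
  by (simp add: qsym_def qadd_def)

lemma qsym_scale: "qsym A \<Longrightarrow> qsym (qscale c A)"
  by (simp add: qsym_def qscale_def)

lemma qsym_qsum: "(\<And>k. k \<in> K \<Longrightarrow> qsym (F k)) \<Longrightarrow> qsym (qsum K F)"
  by (simp add: qsym_def qsum_def)

lemma qsym_on_qubit: "gsym G \<Longrightarrow> qsym (on_qubit Q p G)"
  unfolding on_qubit_def by (rule qsym_tensor) simp

lemma qmult_on_qubit_qid: "finite Q \<Longrightarrow> qmult Q (on_qubit Q p G) (qid Q) = on_qubit Q p G"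
  unfolding on_qubit_def qid_def by (simp add: qmult_tensor)

lemma qsym_on_qubit_mult:
  "finite Q \<Longrightarrow> p \<noteq> i \<Longrightarrow> gsym G \<Longrightarrow> gsym P \<Longrightarrow> qsym (qmult Q (on_qubit Q p G) (on_qubit Q i P))"
  unfolding on_qubit_def by (simp add: qmult_tensor qsym_tensor)

lemma tensor_nonneg: "(\<And>q a b. 0 \<le> G q a b) \<Longrightarrow> 0 \<le> tensor Q G s t"
  unfolding tensor_def
  by (induction Q rule: infinite_finite_induct) (simp_all add: less_eq_complex_def)

lemma qmult_nonneg: "(\<And>s u. 0 \<le> A s u) \<Longrightarrow> (\<And>u t. 0 \<le> B u t) \<Longrightarrow> 0 \<le> qmult Q A B s t"
  by (simp add: qmult_def sum_nonneg)

text \<open>In the order of Complex_Order, z \<le> 0 means that z is real and non-positive.\<close>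

lemma sym_Zmatrix_if_qsym_nonpos:
  assumes "qsym A" "\<And>s t. A s t \<le> 0"
  shows "sym_Zmatrix Q A"
  unfolding sym_Zmatrix_def
proof (intro ballI conjI impI)
  fix s t
  have "Im (A s t) = 0" "Re (A s t) \<le> 0" "Im (A t s) = 0"
    using assms(2)[of s t] assms(2)[of t s] by (auto simp: less_eq_complex_def)
  moreover have "A s t = A t s"
    using assms(1) by (simp add: qsym_def)
  ultimately show "A s t = cnj (A t s)" "Im (A s t) = 0" "Re (A s t) \<le> 0"
    by (auto simp: complex_eq_iff)
qed

definition lit_op :: "nat set \<Rightarrow> (nat \<Rightarrow> bool) \<Rightarrow> literal \<Rightarrow> qop" where
  "lit_op Q x c = on_qubit Q (fst c) (if lit_val x c then X2 else Z2)"

definition clause_op :: "nat set \<Rightarrow> (nat \<Rightarrow> bool) \<Rightarrow> (nat \<Rightarrow> literal) \<Rightarrow> qop" where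
  "clause_op Q x cl =
     qadd (qadd (qadd (lit_op Q x (cl 0)) (lit_op Q x (cl 1))) (lit_op Q x (cl 2)))
       (qscale 2 (qid Q))"

definition clause_term :: "nat set \<Rightarrow> (nat \<Rightarrow> bool) \<Rightarrow> (nat \<Rightarrow> literal) \<Rightarrow> nat \<Rightarrow> qop" where
  "clause_term Q x cl d =
     qmult Q (on_qubit Q d (\<lambda>a b. X2 a b + Z2 a b + I2 a b)) (clause_op Q x cl)"

lemma qconj_Wpow_Sop:
  "finite Q \<Longrightarrow> b (fst c) = x (fst c) \<Longrightarrow> qconj Q (tensor Q (\<lambda>q. Wpow (b q))) (Sop Q c) = lit_op Q x c"
  by (auto simp: Sop_def lit_op_def lit_val_def qconj_Wpow_on_qubit gconj_Wpow)

lemma qconj_Wpow_XZI: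
  assumes "finite Q" "d \<in> Q"
  shows "qconj Q (tensor Q (\<lambda>q. Wpow (b q)))
      (qadd (qadd (on_qubit Q d X2) (on_qubit Q d Z2)) (qid Q))
    = on_qubit Q d (\<lambda>a b. X2 a b + Z2 a b + I2 a b)"
proof -
  have "qconj Q (tensor Q (\<lambda>q. Wpow (b q)))
      (qadd (qadd (on_qubit Q d X2) (on_qubit Q d Z2)) (qid Q))
      = qadd (qadd (on_qubit Q d (if b d then Z2 else X2)) (on_qubit Q d (if b d then X2 else Z2)))
          (qid Q)"
    using assms by (simp add: qconj_add qconj_Wpow_on_qubit qconj_Wpow_qid gconj_Wpow)
  also have "\<dots> = on_qubit Q d (\<lambda>a b. X2 a b + Z2 a b + I2 a b)"
    using assms by (cases "b d") (simp_all add: qid_eq_on_qubit[of Q d] on_qubit_add add_ac)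
  finally show ?thesis .
qed

lemma qconj_H_C:
  assumes "wf3sat n m lit"
  shows "qconj (qubits n m) (Wxy n m x y) (H_C n m lit)
    = qsum {..<m} (\<lambda>k. qscale (-1) (clause_term (qubits n m) x (lit k) (n + k)))"
proof -
  let ?Q = "qubits n m"
  let ?b = "\<lambda>q. if q < n then x q else y (q - n)"
  have W: "Wxy n m x y = tensor ?Q (\<lambda>q. Wpow (?b q))"
    by (simp add: Wxy_def if_distrib)
  have fin: "finite ?Q" and d: "\<And>k. k < m \<Longrightarrow> n + k \<in> ?Q"
    by (simp_all add: qubits_def)
  have vars: "\<And>k j. k < m \<Longrightarrow> j < 3 \<Longrightarrow> ?b (fst (lit k j)) = x (fst (lit k j))"
    using assms by (simp add: wf3sat_def)
  show ?thesis
    unfolding H_C_def Let_def qconj_qsum W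
    by (rule qsum_cong)
      (simp add: fin d qconj_scale qconj_mult tensor_Wpow_unitary qconj_Wpow_XZI clause_term_def,
        simp add: fin vars clause_op_def qconj_add qconj_scale qconj_Wpow_Sop qconj_Wpow_qid)
qed

lemma all_less_three: "(\<forall>j<3. P j) \<longleftrightarrow> P 0 \<and> P 1 \<and> P (2::nat)"
  by (auto simp: less_Suc_eq eval_nat_numeral)

lemma ex_less_three: "(\<exists>j<3. P j) \<longleftrightarrow> P 0 \<or> P 1 \<or> P (2::nat)"
  by (auto simp: less_Suc_eq eval_nat_numeral)

lemma lit_op_nonneg_off_diag:
  assumes "finite Q" "fst c \<in> Q" "\<exists>q\<in>Q. s q \<noteq> t q"
  shows "0 \<le> lit_op Q x c s t"
  using assms by (auto simp: lit_op_def on_qubit_entry X2_def Z2_def less_eq_complex_def)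

lemma lit_op_diag:
  assumes "finite Q" "fst c \<in> Q" "\<forall>q\<in>Q. s q = t q"
  shows "lit_op Q x c s t = (if lit_val x c then 0 else if t (fst c) then -1 else 1)"
  using assms by (simp add: lit_op_def on_qubit_entry X2_def Z2_def)

lemma lit_op_eq_0:
  "finite Q \<Longrightarrow> fst c \<in> Q \<Longrightarrow> p \<in> Q \<Longrightarrow> p \<noteq> fst c \<Longrightarrow> u p \<noteq> t p \<Longrightarrow> lit_op Q x c u t = 0"
  by (simp add: lit_op_def on_qubit_eq_0)

lemma clause_op_nonneg:
  assumes "finite Q" "\<forall>j<3. fst (cl j) \<in> Q" "\<exists>j<3. lit_val x (cl j)"
  shows "0 \<le> clause_op Q x cl s t"
proof (cases "\<forall>q\<in>Q. s q = t q")
  case True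
  then show ?thesis
    using assms
    by (auto simp: all_less_three ex_less_three clause_op_def qadd_def qscale_def lit_op_diag
        qid_entry less_eq_complex_def)
next
  case False
  then have "qid Q s t = 0"
    by (simp add: qid_entry assms(1))
  with False show ?thesis
    using assms
    by (simp add: all_less_three clause_op_def qadd_def qscale_def lit_op_nonneg_off_diag)
qed

lemma clause_op_unsat_diag:
  assumes "finite Q" "\<forall>j<3. fst (cl j) \<in> Q"
    and "\<forall>j<3. \<not> lit_val x (cl j)" "\<forall>j<3. t (fst (cl j))"
  shows "clause_op Q x cl t t = -1"
  using assms by (simp add: all_less_three clause_op_def qadd_def qscale_def lit_op_diag qid_entry)

lemma clause_op_eq_0:
  assumes "finite Q" "\<forall>j<3. fst (cl j) \<in> Q \<and> fst (cl j) \<noteq> p" "p \<in> Q" "u p \<noteq> t p"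
  shows "clause_op Q x cl u t = 0"
proof -
  have "qid Q u t = 0"
    using assms by (auto simp: qid_entry)
  then show ?thesis
    using assms by (simp add: all_less_three clause_op_def qadd_def qscale_def lit_op_eq_0)
qed

lemma qsym_clause_term:
  assumes "finite Q" "\<forall>j<3. fst (cl j) \<noteq> d"
  shows "qsym (clause_term Q x cl d)"
proof -
  have "gsym (\<lambda>a b. X2 a b + Z2 a b + I2 a b)"
    by (simp add: gsym_def X2_def Z2_def I2_def)
  then show ?thesis
    unfolding clause_term_def clause_op_def lit_op_def
      qmult_add_right qmult_scale_right qmult_on_qubit_qid[OF assms(1)]
    by (intro qsym_add qsym_scale qsym_on_qubit_mult qsym_on_qubit assms(1))
      (use assms(2) in \<open>auto simp: all_less_three\<close>)
qed

lemma clause_term_nonneg: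
  assumes "finite Q" "\<forall>j<3. fst (cl j) \<in> Q" "\<exists>j<3. lit_val x (cl j)"
  shows "0 \<le> clause_term Q x cl d s t"
  unfolding clause_term_def on_qubit_def
  by (intro qmult_nonneg tensor_nonneg clause_op_nonneg assms)
    (auto simp: X2_def Z2_def I2_def less_eq_complex_def)

lemma wf3sat_clause_vars:
  assumes "wf3sat n m lit" "k < m"
  shows "\<forall>j<3. fst (lit k j) \<in> qubits n m \<and> fst (lit k j) \<noteq> n + k'"
proof (intro allI impI)
  fix j :: nat
  assume "j < 3"
  then have "fst (lit k j) < n"
    using assms by (simp add: wf3sat_def)
  then show "fst (lit k j) \<in> qubits n m \<and> fst (lit k j) \<noteq> n + k'"
    by (simp add: qubits_def)
qed

lemma sat_imp_sym_Zmatrix_qconj_H_C: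
  assumes "wf3sat n m lit" "sat3 m lit x"
  shows "sym_Zmatrix (qubits n m) (qconj (qubits n m) (Wxy n m x y) (H_C n m lit))"
proof -
  let ?Q = "qubits n m"
  have "qsym (clause_term ?Q x (lit k) (n + k))" if "k < m" for k
    using wf3sat_clause_vars[OF assms(1) that] by (intro qsym_clause_term) (auto simp: qubits_def)
  moreover have "0 \<le> clause_term ?Q x (lit k) (n + k) s t" if "k < m" for k s t
    using wf3sat_clause_vars[OF assms(1) that] assms(2) that
    by (intro clause_term_nonneg) (auto simp: qubits_def sat3_def)
  ultimately show ?thesis
    unfolding qconj_H_C[OF assms(1)]
    by (intro sym_Zmatrix_if_qsym_nonpos qsym_qsum qsym_scale)
      (auto simp: qsum_def qscale_def intro: sum_nonpos)
qed

lemma unsat_clause_qconj_H_C_entry: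
  assumes wf: "wf3sat n m lit" and k: "k < m" and unsat: "\<forall>j<3. \<not> lit_val x (lit k j)"
    and t: "t \<in> basis (qubits n m)" "\<forall>q\<in>qubits n m. t q"
  shows "qconj (qubits n m) (Wxy n m x y) (H_C n m lit) (t(n + k := False)) t = 1"
proof -
  let ?Q = "qubits n m"
  let ?s = "t(n + k := False)"
  have Q: "finite ?Q" and d: "\<And>k. k < m \<Longrightarrow> n + k \<in> ?Q"
    by (simp_all add: qubits_def)
  have s: "?s \<in> basis ?Q"
    using t(1) d[OF k] by (rule fun_upd_in_basis)
  have term_entry: "clause_term ?Q x (lit k') (n + k') ?s t
      = (X2 (?s (n + k')) True + Z2 (?s (n + k')) True + I2 (?s (n + k')) True)
        * clause_op ?Q x (lit k') (?s(n + k' := True)) t" if "k' < m" for k'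
  proof -
    have "t (n + k') = True"
      using t(2) d[OF that] by blast
    moreover have "clause_op ?Q x (lit k') u t = 0" if "u (n + k') \<noteq> t (n + k')" for u
      using Q wf3sat_clause_vars[OF wf \<open>k' < m\<close>] d[OF \<open>k' < m\<close>] that by (rule clause_op_eq_0)
    ultimately show ?thesis
      unfolding clause_term_def using qmult_on_qubit_entry[OF Q d[OF that] s] by simp
  qed
  have "clause_term ?Q x (lit k') (n + k') ?s t = 0" if "k' < m" "k' \<noteq> k" for k'
  proof -
    have "clause_op ?Q x (lit k') (?s(n + k' := True)) t = 0"
      using Q wf3sat_clause_vars[OF wf that(1)] d[OF k]
      by (rule clause_op_eq_0) (use t(2) d[OF k] that in auto)
    then show ?thesis
      using term_entry[OF that(1)] by simp
  qed
  then have "qconj ?Q (Wxy n m x y) (H_C n m lit) ?s t = - clause_term ?Q x (lit k) (n + k) ?s t"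
    unfolding qconj_H_C[OF wf] qsum_def qscale_def using k
    by (subst sum_eq_single[of _ k]) auto
  also have "\<dots> = 1"
  proof -
    have "?s(n + k := True) = t"
      using t(2) d[OF k] by (auto simp: fun_eq_iff)
    then show ?thesis
      using term_entry[OF k] Q wf3sat_clause_vars[OF wf k] unsat t(2)
      by (simp add: X2_def Z2_def I2_def clause_op_unsat_diag)
  qed
  finally show ?thesis .
qed

lemma sym_Zmatrix_qconj_H_C_imp_sat:
  assumes wf: "wf3sat n m lit"
    and Zmatrix: "sym_Zmatrix (qubits n m) (qconj (qubits n m) (Wxy n m x y) (H_C n m lit))"
  shows "sat3 m lit x"
proof (rule ccontr)
  assume "\<not> sat3 m lit x"
  then obtain k where k: "k < m" and unsat: "\<forall>j<3. \<not> lit_val x (lit k j)"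
    unfolding sat3_def by blast
  define t where "t = (\<lambda>q. if q \<in> qubits n m then True else undefined)"
  have t: "t \<in> basis (qubits n m)" "\<forall>q\<in>qubits n m. t q"
    by (auto simp: t_def basis_def)
  moreover have "t(n + k := False) \<in> basis (qubits n m)" "t(n + k := False) \<noteq> t"
    using k t by (auto simp: qubits_def fun_eq_iff intro: fun_upd_in_basis)
  ultimately have "Re (qconj (qubits n m) (Wxy n m x y) (H_C n m lit) (t(n + k := False)) t) \<le> 0"
    using Zmatrix unfolding sym_Zmatrix_def by blast
  then show False
    using unsat_clause_qconj_H_C_entry[OF wf k unsat t] by simp
qed

theorem lemma5p4:
  fixes n m :: nat and lit :: "nat \<Rightarrow> nat \<Rightarrow> literal" and x :: "nat \<Rightarrow> bool"
  assumes "wf3sat n m lit"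
  shows "sat3 m lit x \<longleftrightarrow>
    (\<forall>y :: nat \<Rightarrow> bool. sym_Zmatrix (qubits n m)
       (qmult (qubits n m) (qmult (qubits n m) (Wxy n m x y) (H_C n m lit)) (qadj (Wxy n m x y))))"
  unfolding qconj_def[symmetric]
  using sat_imp_sym_Zmatrix_qconj_H_C[OF assms] sym_Zmatrix_qconj_H_C_imp_sat[OF assms] by blast

end
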